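(* The big-O problem for instances $(\mathcal{W},s,s')$ with $L_s(\mathcal{W})$ and $L_{s'}(\mathcal{W})$ letter-bounded reduces algorithmically to the big-O problem for instances whose two languages are plus-letter-bounded; that is, it is decidable by an algorithm with access to an oracle for the latter problem.
   Context: A (non-negative) weighted automaton is $\langle Q,\Sigma,M,F\rangle$ with finite $Q$, finite $\Sigma$, $M:\Sigma\to\mathbb{Q}_{\ge0}^{Q\times Q}$, $F\subseteq Q$; $\nu_s(a_1\cdots a_n)=\sum_{t\in F}(M(a_1)\cdots M(a_n))_{s,t}$ and $L_s(\mathcal{W})=\{w:\nu_s(w)>0\}$. State $s$ is big-O of $s'$ if there is $C>0$ with $\nu_s(w)\le C\nu_{s'}(w)$ for all $w\in\Sigma^*$; the big-O problem asks this for given $(\mathcal{W},s,s')$. A language $L$ is letter-bounded if $L\subseteq a_1^*\cdots a_m^*$, and plus-letter-bounded if $L\subseteq a_1^+\cdots a_m^+$, for some letters $a_1,\dots,a_m\in\Sigma$. *)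

theory Defs
  imports "Jordan_Normal_Form.Matrix" "HOL-Library.Nat_Bijection"
begin

(* States are 0..<nstates, letters are 0..<nletters; trans a is the
  (nstates x nstates) non-negative rational matrix M(a); final is F. *)

record wa =
  nstates :: nat
  nletters :: nat
  trans :: "nat \<Rightarrow> rat mat"
  final :: "nat set"

definition wf_wa :: "wa \<Rightarrow> bool" where
  "wf_wa A \<longleftrightarrow>
     (\<forall>a < nletters A. trans A a \<in> carrier_mat (nstates A) (nstates A)
        \<and> (\<forall>i < nstates A. \<forall>j < nstates A. trans A a $$ (i, j) \<ge> 0))
     \<and> final A \<subseteq> {..<nstates A}"

definition words :: "wa \<Rightarrow> nat list set" where
  "words A = lists {..<nletters A}"

definition nu :: "wa \<Rightarrow> nat \<Rightarrow> nat list \<Rightarrow> rat" where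
  "nu A s w = (\<Sum>t\<in>final A. (foldr (*) (map (trans A) w) (1\<^sub>m (nstates A))) $$ (s, t))"

definition lang :: "wa \<Rightarrow> nat \<Rightarrow> nat list set" where
  "lang A s = {w \<in> words A. nu A s w > 0}"

type_synonym bo_instance = "wa \<times> nat \<times> nat"

definition wf_inst :: "bo_instance \<Rightarrow> bool" where
  "wf_inst I = (case I of (A, s, s') \<Rightarrow> wf_wa A \<and> s < nstates A \<and> s' < nstates A)"

definition big_O :: "bo_instance \<Rightarrow> bool" where
  "big_O I = (case I of (A, s, s') \<Rightarrow>
     (\<exists>C::real. C > 0 \<and> (\<forall>w\<in>words A. real_of_rat (nu A s w) \<le> C * real_of_rat (nu A s' w))))"

definition in_star_seq :: "nat list \<Rightarrow> nat list \<Rightarrow> bool" where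
  "in_star_seq as w \<longleftrightarrow>
     (\<exists>ns. length ns = length as \<and> w = concat (map2 (\<lambda>n a. replicate n a) ns as))"

definition in_plus_seq :: "nat list \<Rightarrow> nat list \<Rightarrow> bool" where
  "in_plus_seq as w \<longleftrightarrow>
     (\<exists>ns. length ns = length as \<and> (\<forall>n\<in>set ns. n > 0)
        \<and> w = concat (map2 (\<lambda>n a. replicate n a) ns as))"

definition letter_bounded :: "wa \<Rightarrow> nat list set \<Rightarrow> bool" where
  "letter_bounded A L \<longleftrightarrow>
     (\<exists>as. set as \<subseteq> {..<nletters A} \<and> (\<forall>w\<in>L. in_star_seq as w))"

definition plus_letter_bounded :: "wa \<Rightarrow> nat list set \<Rightarrow> bool" where
  "plus_letter_bounded A L \<longleftrightarrow>
     (\<exists>as. set as \<subseteq> {..<nletters A} \<and> (\<forall>w\<in>L. in_plus_seq as w))"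

definition lb_inst :: "bo_instance \<Rightarrow> bool" where
  "lb_inst I = (case I of (A, s, s') \<Rightarrow>
     wf_inst I \<and> letter_bounded A (lang A s) \<and> letter_bounded A (lang A s'))"

definition plb_inst :: "bo_instance \<Rightarrow> bool" where
  "plb_inst I = (case I of (A, s, s') \<Rightarrow>
     wf_inst I \<and> plus_letter_bounded A (lang A s) \<and> plus_letter_bounded A (lang A s'))"

definition enc_rat :: "rat \<Rightarrow> nat" where
  "enc_rat r = (case quotient_of r of (p, q) \<Rightarrow> prod_encode (int_encode p, int_encode q))"

definition enc_mat :: "rat mat \<Rightarrow> nat" where
  "enc_mat M = list_encode [dim_row M, dim_col M,
      list_encode (map (\<lambda>row. list_encode (map enc_rat row)) (mat_to_list M))]"

definition enc_inst :: "bo_instance \<Rightarrow> nat" where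
  "enc_inst I = (case I of (A, s, s') \<Rightarrow>
     list_encode [nstates A, nletters A,
       list_encode (map (\<lambda>a. enc_mat (trans A a)) [0..<nletters A]),
       list_encode (sorted_list_of_set (final A)), s, s'])"

datatype recf = Zero | Succ | Proj nat | Comp recf "recf list" | Prim recf recf | Mini recf | Orc

inductive ev :: "(nat \<Rightarrow> nat) \<Rightarrow> recf \<Rightarrow> nat list \<Rightarrow> nat \<Rightarrow> bool" for Or where
  ev_zero: "ev Or Zero xs 0"
| ev_succ: "ev Or Succ (x # xs) (Suc x)"
| ev_proj: "i < length xs \<Longrightarrow> ev Or (Proj i) xs (xs ! i)"
| ev_comp: "length ys = length gs \<Longrightarrow> (\<forall>i < length gs. ev Or (gs ! i) xs (ys ! i))
             \<Longrightarrow> ev Or f ys z \<Longrightarrow> ev Or (Comp f gs) xs z"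
| ev_prim0: "ev Or f xs y \<Longrightarrow> ev Or (Prim f g) (0 # xs) y"
| ev_primS: "ev Or (Prim f g) (n # xs) y \<Longrightarrow> ev Or g (y # n # xs) z
             \<Longrightarrow> ev Or (Prim f g) (Suc n # xs) z"
| ev_mini: "ev Or f (y # xs) 0 \<Longrightarrow> (\<forall>z < y. \<exists>v. ev Or f (z # xs) v \<and> v > 0)
             \<Longrightarrow> ev Or (Mini f) xs y"
| ev_orc: "ev Or Orc (x # xs) (Or x)"

definition plb_oracle :: "(nat \<Rightarrow> nat) \<Rightarrow> bool" where
  "plb_oracle Or \<longleftrightarrow> (\<forall>I. plb_inst I \<longrightarrow> Or (enc_inst I) = (if big_O I then 1 else 0))"

end

theory Submission
  imports Defs
begin

(* If L_s is letter-bounded, every word accepted from s consists of at most 2|Q| maximal blocks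
  of equal letters: on an accepting run, two block boundaries of equal parity cannot carry the
  same state, since the loop between them contains a letter change and pumping it would produce
  words of L_s with unboundedly many letter changes. So L_s is covered by the finitely many
  languages b_1^+ ... b_j^+ with j <= 2|Q|. Multiplying W with an automaton for b_1^+ ... b_j^+
  multiplies both nu_s and nu_s' by a common nonnegative weight that is positive exactly on
  b_1^+ ... b_j^+; the resulting instances are plus-letter-bounded, and (W, s, s') is big-O iff
  all of them are. A primitive recursive program computes the codes of these instances from
  the code of (W, s, s') and multiplies the oracle's answers. *)

section \<open>Positive runs of weighted automata\<close>

lemma sum_pos_iff_ex_pos:
  fixes f :: "'a \<Rightarrow> 'b :: {ordered_comm_monoid_add, linorder}"
  assumes "finite A" and "\<And>x. x \<in> A \<Longrightarrow> 0 \<le> f x"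
  shows "0 < sum f A \<longleftrightarrow> (\<exists>x\<in>A. 0 < f x)"
proof -
  have "sum f A = 0 \<longleftrightarrow> (\<forall>x\<in>A. f x = 0)" by (rule sum_nonneg_eq_0_iff[OF assms])
  moreover have "0 \<le> sum f A" using assms(2) by (rule sum_nonneg)
  ultimately show ?thesis using assms(2) by (force simp: order.strict_iff_order)
qed

definition word_mat :: "wa \<Rightarrow> nat list \<Rightarrow> rat mat" where
  "word_mat A w = foldr (*) (map (trans A) w) (1\<^sub>m (nstates A))"

lemma nu_word_mat: "nu A s w = (\<Sum>t\<in>final A. word_mat A w $$ (s, t))"
  by (simp add: nu_def word_mat_def)

lemma word_mat_Nil [simp]: "word_mat A [] = 1\<^sub>m (nstates A)"
  by (simp add: word_mat_def)

lemma word_mat_Cons: "word_mat A (a # w) = trans A a * word_mat A w"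
  by (simp add: word_mat_def)

lemma trans_carrier: "wf_wa A \<Longrightarrow> a < nletters A \<Longrightarrow> trans A a \<in> carrier_mat (nstates A) (nstates A)"
  by (simp add: wf_wa_def)

lemma trans_nonneg:
  "wf_wa A \<Longrightarrow> a < nletters A \<Longrightarrow> i < nstates A \<Longrightarrow> j < nstates A \<Longrightarrow> 0 \<le> trans A a $$ (i, j)"
  by (simp add: wf_wa_def)

lemma finite_final: "wf_wa A \<Longrightarrow> finite (final A)"
  by (auto simp: wf_wa_def intro: finite_subset)

lemma word_mat_carrier:
  "wf_wa A \<Longrightarrow> set w \<subseteq> {..<nletters A} \<Longrightarrow> word_mat A w \<in> carrier_mat (nstates A) (nstates A)"
  by (induction w) (auto simp: word_mat_Cons intro!: mult_carrier_mat trans_carrier)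

lemma word_mat_Cons_index:
  assumes "wf_wa A" "a < nletters A" "set w \<subseteq> {..<nletters A}" "q < nstates A" "q'' < nstates A"
  shows "word_mat A (a # w) $$ (q, q'') = (\<Sum>q'<nstates A. trans A a $$ (q, q') * word_mat A w $$ (q', q''))"
  using trans_carrier[OF assms(1,2)] word_mat_carrier[OF assms(1,3)] assms(4,5)
  by (auto simp: word_mat_Cons scalar_prod_def atLeast0LessThan intro!: sum.cong)

lemma word_mat_singleton_index:
  "wf_wa A \<Longrightarrow> a < nletters A \<Longrightarrow> q < nstates A \<Longrightarrow> q' < nstates A \<Longrightarrow>
    word_mat A [a] $$ (q, q') = trans A a $$ (q, q')"
  by (simp add: word_mat_Cons_index if_distrib cong: if_cong)

lemma word_mat_nonneg:
  "wf_wa A \<Longrightarrow> set w \<subseteq> {..<nletters A} \<Longrightarrow> q < nstates A \<Longrightarrow> q' < nstates A \<Longrightarrow>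
    0 \<le> word_mat A w $$ (q, q')"
proof (induction w arbitrary: q)
  case (Cons a w)
  then show ?case
    by (simp add: word_mat_Cons_index, intro sum_nonneg mult_nonneg_nonneg) (auto intro: trans_nonneg)
qed simp

lemma nu_nonneg: "wf_wa A \<Longrightarrow> s < nstates A \<Longrightarrow> w \<in> words A \<Longrightarrow> 0 \<le> nu A s w"
  unfolding nu_word_mat words_def by (intro sum_nonneg word_mat_nonneg) (auto simp: wf_wa_def)

definition pos_run :: "wa \<Rightarrow> nat \<Rightarrow> nat list \<Rightarrow> nat \<Rightarrow> bool" where
  "pos_run A q u q' \<longleftrightarrow>
     q < nstates A \<and> q' < nstates A \<and> set u \<subseteq> {..<nletters A} \<and> 0 < word_mat A u $$ (q, q')"

lemma pos_run_Nil [simp]: "pos_run A q [] q' \<longleftrightarrow> q < nstates A \<and> q = q'"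
  by (auto simp: pos_run_def split: if_splits)

lemma pos_run_Cons:
  assumes wf: "wf_wa A"
  shows "pos_run A q (a # u) q'' \<longleftrightarrow> (\<exists>q'. pos_run A q [a] q' \<and> pos_run A q' u q'')"
proof (cases "q < nstates A \<and> q'' < nstates A \<and> a < nletters A \<and> set u \<subseteq> {..<nletters A}")
  case True
  then have q: "q < nstates A" "q'' < nstates A" and a: "a < nletters A"
    and u: "set u \<subseteq> {..<nletters A}" by auto
  have nonneg: "0 \<le> trans A a $$ (q, q')" "0 \<le> word_mat A u $$ (q', q'')" if "q' < nstates A" for q'
    using trans_nonneg[OF wf a q(1) that] word_mat_nonneg[OF wf u that q(2)] by auto
  have "0 < word_mat A (a # u) $$ (q, q'') \<longleftrightarrow>
      (\<exists>q'\<in>{..<nstates A}. 0 < trans A a $$ (q, q') * word_mat A u $$ (q', q''))"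
    unfolding word_mat_Cons_index[OF wf a u q] using nonneg by (intro sum_pos_iff_ex_pos) auto
  also have "\<dots> \<longleftrightarrow> (\<exists>q'<nstates A. 0 < trans A a $$ (q, q') \<and> 0 < word_mat A u $$ (q', q''))"
    using nonneg by (auto simp: zero_less_mult_iff dest: leD)
  finally show ?thesis
    using True by (auto simp: pos_run_def word_mat_singleton_index[OF wf a])
qed (auto simp: pos_run_def)

lemma pos_run_append:
  assumes wf: "wf_wa A"
  shows "pos_run A q (u @ v) q'' \<longleftrightarrow> (\<exists>q'. pos_run A q u q' \<and> pos_run A q' v q'')"
proof (induction u arbitrary: q)
  case Nil
  show ?case by (auto simp: pos_run_def split: if_splits)
next
  case (Cons a u)
  have "pos_run A q ((a # u) @ v) q'' \<longleftrightarrow> (\<exists>q1. pos_run A q [a] q1 \<and> pos_run A q1 (u @ v) q'')"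
    using pos_run_Cons[OF wf, of q a "u @ v"] by simp
  also have "\<dots> \<longleftrightarrow> (\<exists>q'. pos_run A q (a # u) q' \<and> pos_run A q' v q'')"
    using Cons.IH pos_run_Cons[OF wf, of q a u] by blast
  finally show ?case .
qed

lemma pos_run_concat_replicate:
  assumes "wf_wa A" "pos_run A q y q"
  shows "pos_run A q (concat (replicate r y)) q"
proof (induction r)
  case 0
  show ?case using assms(2) by (simp add: pos_run_def)
next
  case (Suc r)
  then show ?case using assms pos_run_append by auto
qed

lemma lang_iff_pos_run:
  assumes wf: "wf_wa A" and s: "s < nstates A"
  shows "w \<in> lang A s \<longleftrightarrow> (\<exists>t\<in>final A. pos_run A s w t)"
proof -
  have F: "final A \<subseteq> {..<nstates A}" using wf by (simp add: wf_wa_def)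
  have "w \<in> words A \<Longrightarrow> 0 < nu A s w \<longleftrightarrow> (\<exists>t\<in>final A. 0 < word_mat A w $$ (s, t))"
    unfolding nu_word_mat using F s wf
    by (intro sum_pos_iff_ex_pos finite_final) (auto intro!: word_mat_nonneg simp: words_def)
  then show ?thesis using F s by (auto simp: lang_def pos_run_def words_def)
qed

section \<open>Words accepted from a letter-bounded state have few blocks\<close>

fun letter_changes :: "nat list \<Rightarrow> nat" where
  "letter_changes (a # b # w) = of_bool (a \<noteq> b) + letter_changes (b # w)"
| "letter_changes _ = 0"

lemma letter_changes_append: "letter_changes u + letter_changes v \<le> letter_changes (u @ v)"
proof (induction u rule: letter_changes.induct)
  case ("2_2" a)
  then show ?case by (cases v) auto
qed auto

lemma letter_changes_concat_replicate: "r * letter_changes y \<le> letter_changes (concat (replicate r y))"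
proof (induction r)
  case (Suc r)
  then show ?case using letter_changes_append[of y "concat (replicate r y)"] by simp
qed simp

lemma letter_changes_replicate_append: "letter_changes (replicate n a @ v) \<le> Suc (letter_changes v)"
proof (induction n)
  case (Suc n)
  then show ?case by (cases n; cases v) auto
qed simp

lemma letter_changes_in_star_seq: "in_star_seq as w \<Longrightarrow> letter_changes w \<le> length as"
proof -
  have "letter_changes (concat (map2 (\<lambda>n a. replicate n a) ns as)) \<le> length as"
    if "length ns = length as" for ns
    using that
  proof (induction ns as rule: list_induct2)
    case (Cons n ns a as)
    then show ?case
      using letter_changes_replicate_append[of n a "concat (map2 (\<lambda>n a. replicate n a) ns as)"] by simp
  qed simp
  then show "in_star_seq as w \<Longrightarrow> ?thesis" by (auto simp: in_star_seq_def)
qed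

lemma letter_changes_two_blocks:
  assumes "a \<noteq> b" "0 < n" "0 < m"
  shows "0 < letter_changes (replicate n a @ replicate m b)"
proof -
  have "0 < letter_changes (a # b # replicate (m - 1) b)" using assms(1) by simp
  also have "\<dots> \<le> letter_changes (replicate (n - 1) a @ a # b # replicate (m - 1) b)"
    by (rule le_trans[OF le_add2 letter_changes_append])
  also have "replicate (n - 1) a @ a # b # replicate (m - 1) b = replicate n a @ replicate m b"
    using assms(2,3) by (cases n; cases m) (simp_all add: replicate_append_same)
  finally show ?thesis .
qed

lemma in_plus_seq_remdups_adj: "in_plus_seq (remdups_adj w) w"
  unfolding in_plus_seq_def
proof (induction w)
  case (Cons x xs)
  then obtain ns where ns: "length ns = length (remdups_adj xs)" "\<forall>n\<in>set ns. 0 < n"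
    "xs = concat (map2 (\<lambda>n a. replicate n a) ns (remdups_adj xs))" by blast
  show ?case
  proof (cases "remdups_adj xs")
    case Nil
    then show ?thesis by (intro exI[of _ "[1]"]) simp
  next
    case (Cons y ys)
    with ns obtain n1 ns' where n1: "ns = n1 # ns'" by (cases ns) auto
    show ?thesis
    proof (cases "x = y")
      case True
      then show ?thesis using ns Cons n1 by (intro exI[of _ "Suc n1 # ns'"]) (simp add: remdups_adj_Cons)
    next
      case False
      then show ?thesis using ns Cons n1 by (intro exI[of _ "1 # n1 # ns'"]) (simp add: remdups_adj_Cons)
    qed
  qed
qed simp

text \<open>Pumping a loop of an accepting run multiplies its letter changes, so in a letter-bounded
  language the loops contain none.\<close>

lemma loop_letter_changes_zero:
  assumes wf: "wf_wa A" and s: "s < nstates A" and lb: "letter_bounded A (lang A s)"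
    and x: "pos_run A s x q" and y: "pos_run A q y q" and z: "pos_run A q z t" and t: "t \<in> final A"
  shows "letter_changes y = 0"
proof (rule ccontr)
  assume changes: "letter_changes y \<noteq> 0"
  obtain as where as: "\<forall>v\<in>lang A s. in_star_seq as v" using lb by (auto simp: letter_bounded_def)
  define v where "v = x @ concat (replicate (Suc (length as)) y) @ z"
  have "pos_run A s v t"
    unfolding v_def using x pos_run_concat_replicate[OF wf y] z pos_run_append[OF wf] by blast
  then have "v \<in> lang A s" using lang_iff_pos_run[OF wf s] t by blast
  then have "letter_changes v \<le> length as" using as letter_changes_in_star_seq by blast
  have "Suc (length as) \<le> Suc (length as) * letter_changes y" using changes by (simp del: mult_Suc)
  also have "\<dots> \<le> letter_changes (concat (replicate (Suc (length as)) y))"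
    by (rule letter_changes_concat_replicate)
  also have "\<dots> \<le> letter_changes (concat (replicate (Suc (length as)) y) @ z)"
    by (rule le_trans[OF le_add1 letter_changes_append])
  also have "\<dots> \<le> letter_changes v"
    unfolding v_def by (rule le_trans[OF le_add2 letter_changes_append])
  finally show False using \<open>letter_changes v \<le> length as\<close> by simp
qed

lemma pos_run_concat_states:
  assumes wf: "wf_wa A"
  shows "pos_run A q (concat B) t \<Longrightarrow> \<exists>qs. length qs = Suc (length B) \<and> qs ! 0 = q \<and> qs ! length B = t
    \<and> (\<forall>i\<le>length B. qs ! i < nstates A) \<and> (\<forall>i<length B. pos_run A (qs ! i) (B ! i) (qs ! Suc i))"
proof (induction B arbitrary: q)
  case Nil
  then show ?case by (intro exI[of _ "[q]"]) simp
next
  case (Cons b B)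
  then obtain q' where "pos_run A q b q'" "pos_run A q' (concat B) t" using pos_run_append[OF wf] by auto
  with Cons.IH obtain qs where "length qs = Suc (length B)" "qs ! 0 = q'" "qs ! length B = t"
    "\<forall>i\<le>length B. qs ! i < nstates A" "\<forall>i<length B. pos_run A (qs ! i) (B ! i) (qs ! Suc i)" by blast
  with \<open>pos_run A q b q'\<close> show ?case
    by (intro exI[of _ "q # qs"]) (auto simp: nth_Cons pos_run_def split: nat.splits)
qed

lemma pos_run_concat_segment:
  assumes wf: "wf_wa A" and runs: "\<forall>i<length B. pos_run A (qs ! i) (B ! i) (qs ! Suc i)"
    and states: "\<forall>i\<le>length B. qs ! i < nstates A"
    and "i \<le> l" "l \<le> length B"
  shows "pos_run A (qs ! i) (concat (drop i (take l B))) (qs ! l)"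
  using \<open>i \<le> l\<close> \<open>l \<le> length B\<close>
proof (induction l)
  case (Suc l)
  show ?case
  proof (cases "i = Suc l")
    case False
    then have "i \<le> l" "l < length B" using Suc.prems by auto
    then show ?thesis
      using Suc.IH runs by (auto simp: take_Suc_conv_app_nth pos_run_append[OF wf])
  qed (use states Suc.prems in simp)
qed (use states in simp)

text \<open>Consider the states of an accepting run at the boundaries of the blocks \<open>B ! i\<close>. Between two
  boundaries of equal parity lie at least two blocks, hence a letter change; by
  \<open>loop_letter_changes_zero\<close> such boundaries carry distinct states.\<close>

lemma lang_concat_length_le:
  assumes wf: "wf_wa A" and s: "s < nstates A" and lb: "letter_bounded A (lang A s)"
    and B: "concat B \<in> lang A s"
    and changes: "\<And>i. Suc i < length B \<Longrightarrow> 0 < letter_changes (B ! i @ B ! Suc i)"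
  shows "length B \<le> 2 * nstates A"
proof -
  obtain t where t: "t \<in> final A" "pos_run A s (concat B) t"
    using B lang_iff_pos_run[OF wf s] by blast
  then obtain qs where qs: "length qs = Suc (length B)" "qs ! 0 = s" "qs ! length B = t"
    and states: "\<forall>i\<le>length B. qs ! i < nstates A"
    and runs: "\<forall>i<length B. pos_run A (qs ! i) (B ! i) (qs ! Suc i)"
    using pos_run_concat_states[OF wf] by blast
  note segment = pos_run_concat_segment[OF wf runs states]
  have distinct_states: "qs ! i \<noteq> qs ! l" if il: "i + 2 \<le> l" "l < length B" for i l
  proof
    assume "qs ! i = qs ! l"
    then have "letter_changes (concat (drop i (take l B))) = 0"
      using loop_letter_changes_zero[OF wf s lb _ _ _ t(1), of "concat (take i B)" "qs ! i"
          "concat (drop i (take l B))" "concat (drop l B)"]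
        segment[of 0 i] segment[of i l] segment[of l "length B"] qs il by simp
    moreover have "drop i (take l B) = B ! i # B ! Suc i # drop (Suc (Suc i)) (take l B)"
      using il by (simp add: Cons_nth_drop_Suc[where xs = "take l B", symmetric])
    ultimately show False
      using changes[of i] il
        letter_changes_append[of "B ! i @ B ! Suc i" "concat (drop (Suc (Suc i)) (take l B))"] by simp
  qed
  have "inj_on (\<lambda>i. (qs ! i, i mod 2)) {..<length B}"
  proof (rule inj_onI, rule ccontr)
    fix i l assume il: "i \<in> {..<length B}" "l \<in> {..<length B}" "i \<noteq> l"
      and eq: "(qs ! i, i mod 2) = (qs ! l, l mod 2)"
    then have "i + 2 \<le> l \<or> l + 2 \<le> i" by (simp, presburger)
    then show False using distinct_states[of i l] distinct_states[of l i] il eq by auto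
  qed
  then have "card {..<length B} \<le> card ({..<nstates A} \<times> {..<2::nat})"
    by (rule card_inj_on_le) (use states in auto)
  then show ?thesis by (simp add: mult.commute)
qed

lemma lang_remdups_adj_length_le:
  assumes wf: "wf_wa A" and s: "s < nstates A" and lb: "letter_bounded A (lang A s)"
    and w: "w \<in> lang A s"
  shows "length (remdups_adj w) \<le> 2 * nstates A"
proof -
  let ?bs = "remdups_adj w"
  obtain ns where ns: "length ns = length ?bs" "\<forall>n\<in>set ns. 0 < n"
    and w_blocks: "w = concat (map2 (\<lambda>n a. replicate n a) ns ?bs)"
    using in_plus_seq_remdups_adj[of w] by (auto simp: in_plus_seq_def)
  have "length (map2 (\<lambda>n a. replicate n a) ns ?bs) \<le> 2 * nstates A"
    using ns by (intro lang_concat_length_le[OF wf s lb])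
      (auto simp: w_blocks[symmetric] w intro!: letter_changes_two_blocks remdups_adj_adjacent)
  then show ?thesis using ns(1) by simp
qed

section \<open>Products with block automata\<close>

definition digits :: "nat \<Rightarrow> nat \<Rightarrow> nat \<Rightarrow> nat list" where
  "digits k j x = map (\<lambda>l. x div k ^ l mod k) [0..<j]"

lemma length_digits [simp]: "length (digits k j x) = j"
  by (simp add: digits_def)

lemma nth_digits: "l < j \<Longrightarrow> digits k j x ! l = x div k ^ l mod k"
  by (simp add: digits_def)

lemma set_digits: "x < k ^ j \<Longrightarrow> set (digits k j x) \<subseteq> {..<k}"
proof (cases "j = 0")
  case False
  moreover assume "x < k ^ j"
  ultimately have "0 < k" by (cases k) (auto simp: power_0_left)
  then show ?thesis by (auto simp: digits_def)
qed (simp add: digits_def)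

lemma digits_surj: "set bs \<subseteq> {..<k} \<Longrightarrow> \<exists>x < k ^ length bs. digits k (length bs) x = bs"
proof (induction bs)
  case (Cons b bs)
  then obtain x' where x': "x' < k ^ length bs" "digits k (length bs) x' = bs" by auto
  have b: "b < k" using Cons.prems by simp
  define x where "x = b + k * x'"
  have "x < k * Suc x'" using b by (simp add: x_def)
  also have "\<dots> \<le> k * k ^ length bs" using x' by (intro mult_le_mono2) simp
  finally have "x < k ^ length (b # bs)" by simp
  moreover have "x mod k = b" "x div (k * k ^ l) = x' div k ^ l" for l
    using b by (simp_all add: x_def div_mult2_eq)
  then have "digits k (length (b # bs)) x = b # bs"
    using x'(2) by (simp add: digits_def upt_conv_Cons map_Suc_upt[symmetric] o_def del: upt_Suc)
  ultimately show ?case by blast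
qed (simp add: digits_def)

text \<open>A nondeterministic automaton with states \<open>0..j\<close> for \<open>b\<^sub>1\<^sup>+ \<cdots> b\<^sub>j\<^sup>+\<close>, where
  \<open>b = digits k j x\<close>: in state \<open>i \<ge> 1\<close> the last letter read belongs to block \<open>i\<close>, and reading
  \<open>a\<close> either stays in the block or enters the next one, provided \<open>a\<close> is that block's letter.\<close>

definition block_step :: "nat \<Rightarrow> nat \<Rightarrow> nat \<Rightarrow> nat \<Rightarrow> nat \<Rightarrow> bool" where
  "block_step k x a i i' \<longleftrightarrow> (i' = i \<or> i' = Suc i) \<and> i' \<noteq> 0 \<and> a = x div k ^ (i' - 1) mod k"

fun block_run :: "nat \<Rightarrow> nat \<Rightarrow> nat \<Rightarrow> nat list \<Rightarrow> nat \<Rightarrow> nat \<Rightarrow> bool" where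
  "block_run k j x [] i i'' \<longleftrightarrow> i = i''"
| "block_run k j x (a # w) i i'' \<longleftrightarrow> (\<exists>i'<Suc j. block_step k x a i i' \<and> block_run k j x w i' i'')"

fun block_weight :: "nat \<Rightarrow> nat \<Rightarrow> nat \<Rightarrow> nat list \<Rightarrow> nat \<Rightarrow> nat \<Rightarrow> rat" where
  "block_weight k j x [] i i'' = of_bool (i = i'')"
| "block_weight k j x (a # w) i i'' =
     (\<Sum>i'<Suc j. of_bool (block_step k x a i i') * block_weight k j x w i' i'')"

lemma block_weight_nonneg: "0 \<le> block_weight k j x w i i''"
  by (induction w arbitrary: i) (auto intro!: sum_nonneg simp del: sum.lessThan_Suc)

lemma block_weight_pos_iff: "0 < block_weight k j x w i i'' \<longleftrightarrow> block_run k j x w i i''"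
proof (induction w arbitrary: i)
  case (Cons a w)
  have "0 < block_weight k j x (a # w) i i'' \<longleftrightarrow>
      (\<exists>i'\<in>{..<Suc j}. 0 < of_bool (block_step k x a i i') * block_weight k j x w i' i'')"
    unfolding block_weight.simps using block_weight_nonneg
    by (intro sum_pos_iff_ex_pos) (simp_all del: sum.lessThan_Suc)
  also have "\<dots> \<longleftrightarrow> block_run k j x (a # w) i i''"
    using Cons.IH by (auto simp: zero_less_mult_iff)
  finally show ?case .
qed simp

lemma block_run_append:
  "block_run k j x u i l \<Longrightarrow> block_run k j x v l m \<Longrightarrow> block_run k j x (u @ v) i m"
  by (induction u arbitrary: i) auto

lemma block_run_block:
  assumes "i < j" "0 < n"
  shows "block_run k j x (replicate n (digits k j x ! i)) i (Suc i)"
proof -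
  have stay: "block_run k j x (replicate n' (digits k j x ! i)) (Suc i) (Suc i)" for n'
    using assms(1) by (induction n') (auto simp: block_step_def nth_digits intro!: exI[of _ "Suc i"])
  obtain n' where "n = Suc n'" using assms(2) by (cases n) auto
  then show ?thesis
    using stay[of n'] assms(1) by (auto simp: block_step_def nth_digits intro!: exI[of _ "Suc i"])
qed

lemma block_run_blocks:
  "length ns = j - i \<Longrightarrow> i \<le> j \<Longrightarrow> \<forall>n\<in>set ns. 0 < n \<Longrightarrow>
    block_run k j x (concat (map2 (\<lambda>n a. replicate n a) ns (drop i (digits k j x)))) i j"
proof (induction ns arbitrary: i)
  case (Cons n ns)
  then have "i < j" by simp
  then have "drop i (digits k j x) = digits k j x ! i # drop (Suc i) (digits k j x)"
    by (intro Cons_nth_drop_Suc[symmetric]) simp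
  moreover have "block_run k j x (replicate n (digits k j x ! i)) i (Suc i)"
    using block_run_block[OF \<open>i < j\<close>] Cons.prems by simp
  moreover have "block_run k j x (concat (map2 (\<lambda>n a. replicate n a) ns (drop (Suc i) (digits k j x)))) (Suc i) j"
    using Cons by simp
  ultimately show ?case by (simp add: block_run_append)
qed simp

lemma block_run_decomposition:
  "block_run k j x w i m \<Longrightarrow> i \<le> j \<Longrightarrow> i \<le> m \<and> (\<exists>n0 ns. length ns = m - i \<and> (\<forall>n\<in>set ns. 0 < n)
    \<and> (i = 0 \<longrightarrow> n0 = 0) \<and> w = replicate n0 (digits k j x ! (i - 1))
      @ concat (map2 (\<lambda>n a. replicate n a) ns (take (m - i) (drop i (digits k j x)))))"
proof (induction w arbitrary: i)
  case Nil
  then show ?case by (intro conjI exI[of _ 0] exI[of _ "[]"]) auto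
next
  case (Cons a w)
  let ?b = "digits k j x"
  from Cons.prems obtain i' where i': "i' \<le> j" "block_step k x a i i'" "block_run k j x w i' m"
    by (auto simp: less_Suc_eq_le)
  from Cons.IH[OF i'(3) i'(1)] obtain n0 ns where IH: "i' \<le> m" "length ns = m - i'"
    "\<forall>n\<in>set ns. 0 < n" "i' = 0 \<longrightarrow> n0 = 0"
    "w = replicate n0 (?b ! (i' - 1)) @ concat (map2 (\<lambda>n a. replicate n a) ns (take (m - i') (drop i' ?b)))"
    by blast
  show ?case
  proof (cases "i' = i")
    case True
    then have "i \<noteq> 0" "a = ?b ! (i - 1)" using i' by (auto simp: block_step_def nth_digits)
    then show ?thesis using IH True by (intro conjI exI[of _ "Suc n0"] exI[of _ ns]) auto
  next
    case False
    then have i'_Suc: "i' = Suc i" and a: "a = ?b ! i" using i' by (auto simp: block_step_def nth_digits)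
    have "drop i ?b = ?b ! i # drop (Suc i) ?b"
      using i' i'_Suc by (intro Cons_nth_drop_Suc[symmetric]) simp
    moreover have "m - i = Suc (m - Suc i)" using IH(1) i'_Suc by simp
    ultimately have "take (m - i) (drop i ?b) = ?b ! i # take (m - Suc i) (drop (Suc i) ?b)" by simp
    then show ?thesis using IH i'_Suc a by (intro conjI exI[of _ 0] exI[of _ "Suc n0 # ns"]) auto
  qed
qed

lemma block_run_iff_in_plus_seq: "block_run k j x w 0 j \<longleftrightarrow> in_plus_seq (digits k j x) w"
proof
  assume "block_run k j x w 0 j"
  from block_run_decomposition[OF this] show "in_plus_seq (digits k j x) w"
    unfolding in_plus_seq_def by auto
next
  assume "in_plus_seq (digits k j x) w"
  then show "block_run k j x w 0 j"
    unfolding in_plus_seq_def using block_run_blocks[of _ j 0 k x] by auto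
qed

text \<open>The product of \<open>A\<close> with the automaton for \<open>b\<^sub>1\<^sup>+ \<cdots> b\<^sub>j\<^sup>+\<close>; the pair of states
  \<open>(q, i)\<close> is encoded as \<open>q * Suc j + i\<close>.\<close>

definition block_product :: "wa \<Rightarrow> nat \<Rightarrow> nat \<Rightarrow> wa" where
  "block_product A j x = \<lparr>nstates = nstates A * Suc j, nletters = nletters A,
     trans = (\<lambda>a. mat (nstates A * Suc j) (nstates A * Suc j) (\<lambda>(r, c).
       if block_step (nletters A) x a (r mod Suc j) (c mod Suc j)
       then trans A a $$ (r div Suc j, c div Suc j) else 0)),
     final = (\<lambda>t. t * Suc j + j) ` final A\<rparr>"

lemma block_product_simps [simp]:
  "nstates (block_product A j x) = nstates A * Suc j"
  "nletters (block_product A j x) = nletters A"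
  "final (block_product A j x) = (\<lambda>t. t * Suc j + j) ` final A"
  "words (block_product A j x) = words A"
  by (simp_all add: block_product_def words_def)

lemma trans_block_product:
  "trans (block_product A j x) a = mat (nstates A * Suc j) (nstates A * Suc j) (\<lambda>(r, c).
     if block_step (nletters A) x a (r mod Suc j) (c mod Suc j)
     then trans A a $$ (r div Suc j, c div Suc j) else 0)"
  by (simp add: block_product_def)

lemma mult_add_less: "q < n \<Longrightarrow> i < m \<Longrightarrow> q * m + i < n * (m::nat)"
proof -
  assume "q < n" "i < m"
  then have "q * m + i < Suc q * m" by simp
  also have "\<dots> \<le> n * m" using \<open>q < n\<close> by (intro mult_le_mono1) simp
  finally show ?thesis .
qed

lemma wf_block_product: "wf_wa A \<Longrightarrow> wf_wa (block_product A j x)"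
  unfolding wf_wa_def
  by (auto simp: trans_block_product less_mult_imp_div_less simp del: mult_Suc_right intro!: mult_add_less)

lemma sum_div_mod:
  "0 < m \<Longrightarrow> (\<Sum>y<n * m. g (y div m) (y mod m)) = (\<Sum>q<n. \<Sum>i<(m::nat). g q i)"
proof -
  assume m: "0 < m"
  have "(\<Sum>y<n * m. g (y div m) (y mod m)) = (\<Sum>p\<in>{..<n} \<times> {..<m}. g (fst p) (snd p))"
    by (rule sum.reindex_bij_witness[where i = "\<lambda>p. fst p * m + snd p" and j = "\<lambda>y. (y div m, y mod m)"])
      (use m in \<open>auto intro: mult_add_less less_mult_imp_div_less\<close>)
  then show ?thesis by (simp add: sum.cartesian_product split_def)
qed

lemma word_mat_block_product:
  assumes wf: "wf_wa A" and w: "set w \<subseteq> {..<nletters A}"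
    and r: "r < nstates A * Suc j" and c: "c < nstates A * Suc j"
  shows "word_mat (block_product A j x) w $$ (r, c) =
    word_mat A w $$ (r div Suc j, c div Suc j) * block_weight (nletters A) j x w (r mod Suc j) (c mod Suc j)"
  using w r
proof (induction w arbitrary: r)
  case Nil
  have "r = c \<longleftrightarrow> r div Suc j = c div Suc j \<and> r mod Suc j = c mod Suc j"
    by (metis div_mult_mod_eq)
  then show ?case using Nil c by (simp add: less_mult_imp_div_less)
next
  case (Cons a w)
  let ?J = "Suc j" and ?n = "nstates A" and ?k = "nletters A" and ?B = "block_product A j x"
  have a: "a < ?k" and w: "set w \<subseteq> {..<?k}" using Cons.prems by auto
  have rc: "r div ?J < ?n" "c div ?J < ?n" using Cons.prems c by (auto intro: less_mult_imp_div_less)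
  have "word_mat ?B (a # w) $$ (r, c) = (\<Sum>y<?n * ?J. trans ?B a $$ (r, y) * word_mat ?B w $$ (y, c))"
    using word_mat_Cons_index[OF wf_block_product[OF wf], where a = a and w = w and q = r and q'' = c]
      Cons.prems c by simp
  also have "\<dots> = (\<Sum>y<?n * ?J. (of_bool (block_step ?k x a (r mod ?J) (y mod ?J))
        * trans A a $$ (r div ?J, y div ?J)) * (word_mat A w $$ (y div ?J, c div ?J)
        * block_weight ?k j x w (y mod ?J) (c mod ?J)))"
    by (rule sum.cong) (use Cons w in \<open>auto simp: trans_block_product\<close>)
  also have "\<dots> = (\<Sum>q<?n. \<Sum>i<?J. (trans A a $$ (r div ?J, q) * word_mat A w $$ (q, c div ?J))
        * (of_bool (block_step ?k x a (r mod ?J) i) * block_weight ?k j x w i (c mod ?J)))"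
    by (subst sum_div_mod) (simp_all add: ac_simps del: sum.lessThan_Suc)
  also have "\<dots> = (\<Sum>q<?n. trans A a $$ (r div ?J, q) * word_mat A w $$ (q, c div ?J))
        * (\<Sum>i<?J. of_bool (block_step ?k x a (r mod ?J) i) * block_weight ?k j x w i (c mod ?J))"
    by (simp only: sum_product)
  also have "\<dots> = word_mat A (a # w) $$ (r div ?J, c div ?J) * block_weight ?k j x (a # w) (r mod ?J) (c mod ?J)"
    using word_mat_Cons_index[OF wf a w rc] by simp
  finally show ?case .
qed

lemma nu_block_product:
  assumes wf: "wf_wa A" and s: "s < nstates A" and w: "w \<in> words A"
  shows "nu (block_product A j x) (s * Suc j) w = nu A s w * block_weight (nletters A) j x w 0 j"
proof -
  have F: "final A \<subseteq> {..<nstates A}" using wf by (simp add: wf_wa_def)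
  have "inj_on (\<lambda>t. t * Suc j + j) (final A)"
    by (rule inj_onI) (simp del: mult_Suc_right)
  then have "nu (block_product A j x) (s * Suc j) w = (\<Sum>t\<in>final A. word_mat (block_product A j x) w $$ (s * Suc j, t * Suc j + j))"
    by (simp add: nu_word_mat sum.reindex)
  also have "\<dots> = (\<Sum>t\<in>final A. word_mat A w $$ (s, t) * block_weight (nletters A) j x w 0 j)"
    using w F s by (intro sum.cong refl, subst word_mat_block_product[OF wf])
      (auto simp: words_def intro!: mult_add_less simp del: mult_Suc_right)
  also have "\<dots> = nu A s w * block_weight (nletters A) j x w 0 j"
    by (simp add: nu_word_mat sum_distrib_right)
  finally show ?thesis .
qed

lemma lang_block_product:
  assumes wf: "wf_wa A" and s: "s < nstates A" and w: "w \<in> lang (block_product A j x) (s * Suc j)"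
  shows "in_plus_seq (digits (nletters A) j x) w"
proof -
  have w': "w \<in> words A" "0 < nu A s w * block_weight (nletters A) j x w 0 j"
    using w nu_block_product[OF wf s] by (auto simp: lang_def)
  then have "0 < block_weight (nletters A) j x w 0 j"
    using nu_nonneg[OF wf s w'(1)] block_weight_nonneg by (auto simp: zero_less_mult_iff)
  then show ?thesis by (simp add: block_weight_pos_iff block_run_iff_in_plus_seq)
qed

lemma plb_inst_block_product:
  assumes wf: "wf_wa A" and s: "s < nstates A" and s': "s' < nstates A" and x: "x < nletters A ^ j"
  shows "plb_inst (block_product A j x, s * Suc j, s' * Suc j)"
proof -
  have "s * Suc j < nstates A * Suc j" "s' * Suc j < nstates A * Suc j"
    using s s' by (simp_all del: mult_Suc_right)
  then have "wf_inst (block_product A j x, s * Suc j, s' * Suc j)"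
    using wf_block_product[OF wf] by (simp add: wf_inst_def del: mult_Suc_right)
  moreover have "plus_letter_bounded (block_product A j x) (lang (block_product A j x) (q * Suc j))"
    if "q < nstates A" for q
    unfolding plus_letter_bounded_def using set_digits[OF x] lang_block_product[OF wf that]
    by (intro exI[of _ "digits (nletters A) j x"]) auto
  ultimately show ?thesis using s s' by (simp add: plb_inst_def)
qed

lemma big_O_block_product:
  assumes wf: "wf_wa A" and s: "s < nstates A" and s': "s' < nstates A" and big_O: "big_O (A, s, s')"
  shows "big_O (block_product A j x, s * Suc j, s' * Suc j)"
proof -
  obtain C :: real where C: "C > 0" "\<forall>w\<in>words A. real_of_rat (nu A s w) \<le> C * real_of_rat (nu A s' w)"
    using big_O by (auto simp: big_O_def)
  have "real_of_rat (nu A s w) * real_of_rat (block_weight (nletters A) j x w 0 j)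
      \<le> C * real_of_rat (nu A s' w) * real_of_rat (block_weight (nletters A) j x w 0 j)"
    if "w \<in> words A" for w
    using C(2) that block_weight_nonneg by (intro mult_right_mono) auto
  then show ?thesis
    using C(1) unfolding big_O_def
    by (auto simp: nu_block_product[OF wf s] nu_block_product[OF wf s'] of_rat_mult mult.assoc
        simp del: mult_Suc_right)
qed

lemma bound_from_finite_cover:
  fixes f g :: "'w \<Rightarrow> real" and d :: "'p \<Rightarrow> 'w \<Rightarrow> real"
  assumes P: "finite P"
    and bound: "\<And>p. p \<in> P \<Longrightarrow> \<exists>C. \<forall>w\<in>W. f w * d p w \<le> C * (g w * d p w)"
    and cover: "\<And>w. w \<in> W \<Longrightarrow> 0 < f w \<Longrightarrow> \<exists>p\<in>P. 0 < d p w"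
    and f: "\<And>w. w \<in> W \<Longrightarrow> 0 \<le> f w" and g: "\<And>w. w \<in> W \<Longrightarrow> 0 \<le> g w"
  shows "\<exists>C>0. \<forall>w\<in>W. f w \<le> C * g w"
proof -
  from bound have "\<forall>p\<in>P. \<exists>C. \<forall>w\<in>W. f w * d p w \<le> C * (g w * d p w)" by blast
  then obtain C where C: "\<forall>p\<in>P. \<forall>w\<in>W. f w * d p w \<le> C p * (g w * d p w)"
    by (rule bchoice[THEN exE])
  define C0 where "C0 = 1 + (\<Sum>p\<in>P. \<bar>C p\<bar>)"
  have C0_pos: "0 < C0"
    unfolding C0_def by (simp add: add_pos_nonneg sum_nonneg)
  have C0_ge: "\<bar>C p\<bar> \<le> C0" if "p \<in> P" for p
    using member_le_sum[of p P "\<lambda>p. \<bar>C p\<bar>"] that P unfolding C0_def by simp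
  have "f w \<le> C0 * g w" if w: "w \<in> W" for w
  proof (cases "0 < f w")
    case True
    then obtain p where p: "p \<in> P" "0 < d p w" using cover w by blast
    have "f w * d p w \<le> (C p * g w) * d p w" using C p(1) w by (simp add: mult.assoc)
    then have "f w \<le> C p * g w" using p(2) by simp
    also have "\<dots> \<le> C0 * g w" using C0_ge[OF p(1)] g[OF w] by (intro mult_right_mono) auto
    finally show ?thesis .
  next
    case False
    then have "f w = 0" using f[OF w] by simp
    then show ?thesis using C0_pos g[OF w] by simp
  qed
  then show ?thesis using C0_pos by blast
qed

lemma big_O_of_block_products:
  assumes wf: "wf_wa A" and s: "s < nstates A" and s': "s' < nstates A"
    and lb: "letter_bounded A (lang A s)"
    and big_O: "\<forall>j<Suc (2 * nstates A). \<forall>x<nletters A ^ j. big_O (block_product A j x, s * Suc j, s' * Suc j)"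
  shows "big_O (A, s, s')"
proof -
  let ?P = "SIGMA j:{..<Suc (2 * nstates A)}. {..<nletters A ^ j}"
  let ?d = "\<lambda>(j, x) w. real_of_rat (block_weight (nletters A) j x w 0 j)"
  have "\<exists>C>0. \<forall>w\<in>words A. real_of_rat (nu A s w) \<le> C * real_of_rat (nu A s' w)"
  proof (rule bound_from_finite_cover[where P = ?P and d = ?d])
    fix p assume "p \<in> ?P"
    then obtain j x where p: "p = (j, x)" "big_O (block_product A j x, s * Suc j, s' * Suc j)"
      using big_O by blast
    then obtain C where "\<forall>w\<in>words A. real_of_rat (nu (block_product A j x) (s * Suc j) w)
        \<le> C * real_of_rat (nu (block_product A j x) (s' * Suc j) w)"
      by (auto simp: big_O_def simp del: mult_Suc_right)
    then show "\<exists>C. \<forall>w\<in>words A. real_of_rat (nu A s w) * ?d p w \<le> C * (real_of_rat (nu A s' w) * ?d p w)"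
      by (auto simp: p nu_block_product[OF wf s] nu_block_product[OF wf s'] of_rat_mult
          simp del: mult_Suc_right)
  next
    fix w assume w: "w \<in> words A" and "0 < real_of_rat (nu A s w)"
    then have "w \<in> lang A s" by (simp add: lang_def)
    let ?j = "length (remdups_adj w)"
    have "set (remdups_adj w) \<subseteq> {..<nletters A}" using w by (auto simp: words_def)
    then obtain x where x: "x < nletters A ^ ?j" "digits (nletters A) ?j x = remdups_adj w"
      using digits_surj by blast
    have "0 < ?d (?j, x) w"
      using x(2) in_plus_seq_remdups_adj[of w] by (simp add: block_weight_pos_iff block_run_iff_in_plus_seq)
    moreover have "?j < Suc (2 * nstates A)"
      using lang_remdups_adj_length_le[OF wf s lb \<open>w \<in> lang A s\<close>] by simp
    ultimately show "\<exists>p\<in>?P. 0 < ?d p w"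
      using x(1) by blast
  next
    show "finite ?P" by simp
  next
    show "0 \<le> real_of_rat (nu A s w)" "0 \<le> real_of_rat (nu A s' w)" if "w \<in> words A" for w
      using nu_nonneg[OF wf s that] nu_nonneg[OF wf s' that] by simp_all
  qed
  then show ?thesis by (simp add: big_O_def)
qed

lemma big_O_iff_block_products:
  assumes "wf_wa A" "s < nstates A" "s' < nstates A" "letter_bounded A (lang A s)"
  shows "big_O (A, s, s') \<longleftrightarrow>
    (\<forall>j<Suc (2 * nstates A). \<forall>x<nletters A ^ j. big_O (block_product A j x, s * Suc j, s' * Suc j))"
  using big_O_block_product[OF assms(1-3)] big_O_of_block_products[OF assms] by blast

section \<open>Programs with an oracle\<close>

definition computes :: "nat \<Rightarrow> recf \<Rightarrow> ((nat \<Rightarrow> nat) \<Rightarrow> nat list \<Rightarrow> nat) \<Rightarrow> bool" where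
  "computes n p F \<longleftrightarrow> (\<forall>Or xs. length xs = n \<longrightarrow> ev Or p xs (F Or xs))"

lemma ev_unique: "ev Or p xs y \<Longrightarrow> ev Or p xs y' \<Longrightarrow> y = y'"
proof (induction arbitrary: y' rule: ev.induct)
  case (ev_comp ys gs xs f z)
  from ev_comp.prems show ?case
  proof (cases rule: ev.cases)
    case (ev_comp ys')
    have "ys' = ys"
      by (rule nth_equalityI) (use ev_comp ev_comp.hyps ev_comp.IH in auto)
    then show ?thesis using ev_comp ev_comp.IH by auto
  qed
next
  case (ev_primS g n xs y z f)
  from ev_primS.prems show ?case by (cases rule: ev.cases) (use ev_primS.IH in auto)
next
  case (ev_mini f y xs)
  from ev_mini.prems show ?case
  proof (cases rule: ev.cases)
    case ev_mini
    show ?thesis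
    proof (rule linorder_cases[of y y'])
      assume "y < y'"
      with ev_mini obtain v where "ev Or f (y # xs) v" "v > 0" by auto
      with ev_mini.IH(1) show ?thesis by force
    next
      assume "y' < y"
      with ev_mini.IH(2) obtain v where "\<forall>v'. ev Or f (y' # xs) v' \<longrightarrow> v = v'" "v > 0" by blast
      with ev_mini show ?thesis by force
    qed
  qed
qed (erule ev.cases; auto)+

lemma computes_ev_iff: "computes n p F \<Longrightarrow> length xs = n \<Longrightarrow> ev Or p xs r \<longleftrightarrow> r = F Or xs"
  unfolding computes_def using ev_unique by blast

lemma computes_cong:
  "computes n p F \<Longrightarrow> (\<And>Or xs. length xs = n \<Longrightarrow> F Or xs = F' Or xs) \<Longrightarrow> computes n p F'"
  unfolding computes_def by metis

named_theorems computes_intros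

lemma computes_Zero [computes_intros]: "computes n Zero (\<lambda>Or xs. 0)"
  unfolding computes_def by (auto intro: ev.intros)

lemma computes_Proj [computes_intros]: "i < n \<Longrightarrow> computes n (Proj i) (\<lambda>Or xs. xs ! i)"
  unfolding computes_def by (auto intro: ev.intros)

lemma computes_Succ [computes_intros]: "n = 1 \<Longrightarrow> computes n Succ (\<lambda>Or xs. Suc (xs ! 0))"
  unfolding computes_def by (auto simp: length_Suc_conv intro: ev.intros)

lemma computes_Orc [computes_intros]: "n = 1 \<Longrightarrow> computes n Orc (\<lambda>Or xs. Or (xs ! 0))"
  unfolding computes_def by (auto simp: length_Suc_conv intro: ev.intros)

definition computes_all ::
    "nat \<Rightarrow> recf list \<Rightarrow> ((nat \<Rightarrow> nat) \<Rightarrow> nat list \<Rightarrow> nat) list \<Rightarrow> bool" where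
  "computes_all n gs Gs \<longleftrightarrow> length gs = length Gs \<and> (\<forall>i<length gs. computes n (gs ! i) (Gs ! i))"

lemma computes_all_Nil [computes_intros]: "computes_all n [] []"
  by (simp add: computes_all_def)

lemma computes_all_Cons [computes_intros]:
  "computes n g G \<Longrightarrow> computes_all n gs Gs \<Longrightarrow> computes_all n (g # gs) (G # Gs)"
  by (auto simp: computes_all_def nth_Cons split: nat.splits)

lemma computes_Comp [computes_intros]:
  assumes "computes_all n gs Gs" and "computes (length gs) f F"
  shows "computes n (Comp f gs) (\<lambda>Or xs. F Or (map (\<lambda>G. G Or xs) Gs))"
  unfolding computes_def
proof (intro allI impI)
  fix Or and xs :: "nat list" assume "length xs = n"
  then show "ev Or (Comp f gs) xs (F Or (map (\<lambda>G. G Or xs) Gs))"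
    using assms by (intro ev_comp[where ys = "map (\<lambda>G. G Or xs) Gs"]) (auto simp: computes_all_def computes_def)
qed

lemma computes_Prim:
  assumes f: "computes (n - 1) f F" and g: "computes (Suc n) g G" and "0 < n"
    and H_0: "\<And>Or ys. length ys = n - 1 \<Longrightarrow> H Or (0 # ys) = F Or ys"
    and H_Suc: "\<And>Or m ys. length ys = n - 1 \<Longrightarrow> H Or (Suc m # ys) = G Or (H Or (m # ys) # m # ys)"
  shows "computes n (Prim f g) H"
  unfolding computes_def
proof (intro allI impI)
  fix Or and xs :: "nat list" assume "length xs = n"
  with \<open>0 < n\<close> obtain m ys where xs: "xs = m # ys" and ys: "length ys = n - 1"
    by (cases xs) auto
  have "ev Or (Prim f g) (m # ys) (H Or (m # ys))"
  proof (induction m)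
    case 0
    show ?case using f ys by (auto simp: H_0 computes_def intro: ev_prim0)
  next
    case (Suc m)
    have "length (H Or (m # ys) # m # ys) = Suc n" using ys \<open>0 < n\<close> by simp
    then show ?case using g ys by (auto simp: H_Suc computes_def intro: ev_primS[OF Suc])
  qed
  then show "ev Or (Prim f g) xs (H Or xs)" by (simp add: xs)
qed

lemmas computes_simps = length_Suc_conv numeral_eq_Suc

primrec r_const :: "nat \<Rightarrow> recf" where
  "r_const 0 = Zero"
| "r_const (Suc c) = Comp Succ [r_const c]"

declare r_const.simps [simp del]

lemma computes_const [computes_intros]: "computes n (r_const c) (\<lambda>Or xs. c)"
proof (induction c)
  case (Suc c)
  show ?case
    unfolding r_const.simps by (rule computes_cong, (rule computes_intros Suc | simp)+)
qed (simp add: r_const.simps computes_intros)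

definition "r_add = Prim (Proj 0) (Comp Succ [Proj 0])"

lemma computes_add [computes_intros]: "n = 2 \<Longrightarrow> computes n r_add (\<lambda>Or xs. xs!0 + xs!1)"
  unfolding r_add_def by (rule computes_Prim, (rule computes_intros | simp add: computes_simps)+)

definition "r_mult = Prim Zero (Comp r_add [Proj 0, Proj 2])"

lemma computes_mult [computes_intros]: "n = 2 \<Longrightarrow> computes n r_mult (\<lambda>Or xs. xs!0 * xs!1)"
  unfolding r_mult_def by (rule computes_Prim, (rule computes_intros | simp add: computes_simps)+)

definition "r_pred = Prim Zero (Proj 1)"

lemma computes_pred [computes_intros]: "n = 1 \<Longrightarrow> computes n r_pred (\<lambda>Or xs. xs!0 - 1)"
  unfolding r_pred_def by (rule computes_Prim, (rule computes_intros | simp add: computes_simps)+)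

definition "r_sub_rev = Prim (Proj 0) (Comp r_pred [Proj 0])"

lemma computes_sub_rev [computes_intros]: "n = 2 \<Longrightarrow> computes n r_sub_rev (\<lambda>Or xs. xs!1 - xs!0)"
  unfolding r_sub_rev_def by (rule computes_Prim, (rule computes_intros | simp add: computes_simps)+)

definition "r_sub = Comp r_sub_rev [Proj 1, Proj 0]"

lemma computes_sub [computes_intros]: "n = 2 \<Longrightarrow> computes n r_sub (\<lambda>Or xs. xs!0 - xs!1)"
  unfolding r_sub_def by (rule computes_cong, (rule computes_intros | simp)+)

definition "r_if = Prim (Proj 1) (Proj 2)"

lemma computes_if [computes_intros]:
  "n = 3 \<Longrightarrow> computes n r_if (\<lambda>Or xs. if xs!0 = 0 then xs!2 else xs!1)"
  unfolding r_if_def by (rule computes_Prim, (rule computes_intros | simp add: computes_simps)+)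

definition "r_sign = Comp r_if [Proj 0, r_const 1, r_const 0]"

lemma computes_sign [computes_intros]: "n = 1 \<Longrightarrow> computes n r_sign (\<lambda>Or xs. of_bool (xs!0 \<noteq> 0))"
  unfolding r_sign_def by (rule computes_cong, (rule computes_intros | simp)+)

definition "r_eq = Comp r_if [Comp r_add [Comp r_sub [Proj 0, Proj 1], Comp r_sub [Proj 1, Proj 0]],
  r_const 0, r_const 1]"

lemma computes_eq [computes_intros]: "n = 2 \<Longrightarrow> computes n r_eq (\<lambda>Or xs. of_bool (xs!0 = xs!1))"
  unfolding r_eq_def by (rule computes_cong, (rule computes_intros | simp)+) auto

definition "r_le = Comp r_if [Comp r_sub [Proj 0, Proj 1], r_const 0, r_const 1]"

lemma computes_le [computes_intros]: "n = 2 \<Longrightarrow> computes n r_le (\<lambda>Or xs. of_bool (xs!0 \<le> xs!1))"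
  unfolding r_le_def by (rule computes_cong, (rule computes_intros | simp)+)

definition "r_mod = Prim Zero (Comp r_if [Comp r_eq [Comp Succ [Proj 0], Proj 2], r_const 0, Comp Succ [Proj 0]])"

lemma computes_mod [computes_intros]: "n = 2 \<Longrightarrow> computes n r_mod (\<lambda>Or xs. xs!0 mod xs!1)"
  unfolding r_mod_def by (rule computes_Prim, (rule computes_intros | simp add: computes_simps mod_Suc)+)

definition "r_div = Prim Zero (Comp r_if [Comp r_mod [Comp Succ [Proj 1], Proj 2], Proj 0, Comp Succ [Proj 0]])"

lemma computes_div [computes_intros]: "n = 2 \<Longrightarrow> computes n r_div (\<lambda>Or xs. xs!0 div xs!1)"
  unfolding r_div_def by (rule computes_Prim, (rule computes_intros | simp add: computes_simps div_Suc)+)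

definition "r_pow_rev = Prim (r_const 1) (Comp r_mult [Proj 0, Proj 2])"

lemma computes_pow_rev [computes_intros]: "n = 2 \<Longrightarrow> computes n r_pow_rev (\<lambda>Or xs. xs!1 ^ xs!0)"
  unfolding r_pow_rev_def by (rule computes_Prim, (rule computes_intros | simp add: computes_simps)+)

definition "r_pow = Comp r_pow_rev [Proj 1, Proj 0]"

lemma computes_pow [computes_intros]: "n = 2 \<Longrightarrow> computes n r_pow (\<lambda>Or xs. xs!0 ^ xs!1)"
  unfolding r_pow_def by (rule computes_cong, (rule computes_intros | simp)+)

definition tri_root :: "nat \<Rightarrow> nat" where
  "tri_root c = (\<Sum>t<c. of_bool (triangle (Suc t) \<le> c))"

lemma triangle_mono: "a \<le> b \<Longrightarrow> triangle a \<le> triangle b"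
  by (induction b) (auto simp: le_Suc_eq)

lemma triangle_bracket: "\<exists>T. triangle T \<le> c \<and> c < triangle (Suc T)"
proof (induction c)
  case (Suc c)
  then obtain T where "triangle T \<le> c" "c < triangle (Suc T)" by blast
  then show ?case
    by (cases "Suc c < triangle (Suc T)") (auto intro: exI[of _ T] exI[of _ "Suc T"])
qed (auto intro: exI[of _ 0])

lemma tri_root_bracket: "triangle (tri_root c) \<le> c \<and> c < triangle (Suc (tri_root c))"
proof -
  obtain T where T: "triangle T \<le> c" "c < triangle (Suc T)" using triangle_bracket by blast
  have "T \<le> triangle T" by (induction T) auto
  have "{..<c} \<inter> {t. triangle (Suc t) \<le> c} = {..<T}"
  proof (intro subset_antisym subsetI)
    fix t assume "t \<in> {..<c} \<inter> {t. triangle (Suc t) \<le> c}"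
    then show "t \<in> {..<T}"
      using T triangle_mono[of "Suc T" "Suc t"] by (cases "t < T") auto
  next
    fix t assume "t \<in> {..<T}"
    then show "t \<in> {..<c} \<inter> {t. triangle (Suc t) \<le> c}"
      using T \<open>T \<le> triangle T\<close> triangle_mono[of "Suc t" T] by auto
  qed
  then have "tri_root c = T"
    by (simp add: tri_root_def Int_def del: triangle_Suc)
  then show ?thesis using T by simp
qed

lemma prod_decode_tri_root:
  "prod_decode c = (c - triangle (tri_root c), tri_root c - (c - triangle (tri_root c)))"
proof -
  let ?T = "tri_root c"
  have "triangle ?T \<le> c" "c - triangle ?T \<le> ?T" using tri_root_bracket[of c] by auto
  then show ?thesis
    using prod_decode_triangle_add[of ?T "c - triangle ?T"] by (simp add: prod_decode_aux.simps)
qed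

definition "r_triangle = Prim Zero (Comp r_add [Proj 0, Comp Succ [Proj 1]])"

lemma computes_triangle [computes_intros]: "n = 1 \<Longrightarrow> computes n r_triangle (\<lambda>Or xs. triangle (xs!0))"
  unfolding r_triangle_def by (rule computes_Prim, (rule computes_intros | simp add: computes_simps)+)

definition "r_prod_encode = Comp r_add [Comp r_triangle [Comp r_add [Proj 0, Proj 1]], Proj 0]"

lemma computes_prod_encode [computes_intros]:
  "n = 2 \<Longrightarrow> computes n r_prod_encode (\<lambda>Or xs. prod_encode (xs!0, xs!1))"
  unfolding r_prod_encode_def by (rule computes_cong, (rule computes_intros | simp add: prod_encode_def)+)

definition "r_tri_root_bounded =
  Prim Zero (Comp r_add [Proj 0, Comp r_le [Comp r_triangle [Comp Succ [Proj 1]], Proj 2]])"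

lemma computes_tri_root_bounded [computes_intros]: "n = 2 \<Longrightarrow>
  computes n r_tri_root_bounded (\<lambda>Or xs. \<Sum>t<xs!0. of_bool (triangle (Suc t) \<le> xs!1))"
  unfolding r_tri_root_bounded_def
  by (rule computes_Prim, (rule computes_intros | simp add: computes_simps)+)

definition "r_tri_root = Comp r_tri_root_bounded [Proj 0, Proj 0]"

lemma computes_tri_root [computes_intros]: "n = 1 \<Longrightarrow> computes n r_tri_root (\<lambda>Or xs. tri_root (xs!0))"
  unfolding r_tri_root_def by (rule computes_cong, (rule computes_intros | simp add: tri_root_def)+)

definition "r_fst_decode = Comp r_sub [Proj 0, Comp r_triangle [Comp r_tri_root [Proj 0]]]"

lemma computes_fst_decode [computes_intros]:
  "n = 1 \<Longrightarrow> computes n r_fst_decode (\<lambda>Or xs. fst (prod_decode (xs!0)))"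
  unfolding r_fst_decode_def
  by (rule computes_cong, (rule computes_intros | simp add: prod_decode_tri_root[of "xs!0" for xs])+)

definition "r_snd_decode = Comp r_sub [Comp r_tri_root [Proj 0], Comp r_fst_decode [Proj 0]]"

lemma computes_snd_decode [computes_intros]:
  "n = 1 \<Longrightarrow> computes n r_snd_decode (\<lambda>Or xs. snd (prod_decode (xs!0)))"
  unfolding r_snd_decode_def
  by (rule computes_cong, (rule computes_intros | simp add: prod_decode_tri_root[of "xs!0" for xs])+)

definition code_hd :: "nat \<Rightarrow> nat" where
  "code_hd c = fst (prod_decode (c - 1))"

definition code_tl :: "nat \<Rightarrow> nat" where
  "code_tl c = snd (prod_decode (c - 1))"

definition code_nth :: "nat \<Rightarrow> nat \<Rightarrow> nat" where
  "code_nth c i = code_hd ((code_tl ^^ i) c)"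

definition code_length :: "nat \<Rightarrow> nat" where
  "code_length c = (\<Sum>t<c. of_bool ((code_tl ^^ t) c \<noteq> 0))"

lemma code_hd_list_encode [simp]: "code_hd (list_encode (x # xs)) = x"
  by (simp add: code_hd_def)

lemma code_tl_list_encode [simp]: "code_tl (list_encode xs) = list_encode (tl xs)"
proof (cases xs)
  case Nil
  have "prod_decode 0 = (0, 0)" using prod_encode_inverse[of "(0, 0)"] by (simp add: prod_encode_def)
  then show ?thesis by (simp add: Nil code_tl_def)
qed (simp add: code_tl_def)

lemma code_tl_iter_list_encode: "(code_tl ^^ i) (list_encode xs) = list_encode (drop i xs)"
  by (induction i) (simp_all add: drop_Suc tl_drop)

lemma code_nth_list_encode [simp]: "i < length xs \<Longrightarrow> code_nth (list_encode xs) i = xs ! i"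
  unfolding code_nth_def code_tl_iter_list_encode
  by (subst Cons_nth_drop_Suc[symmetric]) (simp_all del: list_encode.simps)

lemma length_le_list_encode: "length xs \<le> list_encode xs"
proof (induction xs)
  case (Cons x xs)
  then show ?case using le_prod_encode_2[of "list_encode xs" x] by simp
qed simp

lemma code_length_list_encode [simp]: "code_length (list_encode xs) = length xs"
proof -
  have "list_encode ys = 0 \<longleftrightarrow> ys = []" for ys by (cases ys) auto
  then have "code_length (list_encode xs) = (\<Sum>t<list_encode xs. of_bool (t < length xs))"
    unfolding code_length_def by (intro sum.cong) (auto simp: code_tl_iter_list_encode)
  also have "\<dots> = card ({..<list_encode xs} \<inter> {..<length xs})"
    by (simp add: Int_def lessThan_def)
  also have "{..<list_encode xs} \<inter> {..<length xs} = {..<length xs}"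
    using length_le_list_encode[of xs] by auto
  finally show ?thesis by simp
qed

definition "r_code_hd = Comp r_fst_decode [Comp r_pred [Proj 0]]"

lemma computes_code_hd [computes_intros]: "n = 1 \<Longrightarrow> computes n r_code_hd (\<lambda>Or xs. code_hd (xs!0))"
  unfolding r_code_hd_def by (rule computes_cong, (rule computes_intros | simp add: code_hd_def)+)

definition "r_code_tl = Comp r_snd_decode [Comp r_pred [Proj 0]]"

lemma computes_code_tl [computes_intros]: "n = 1 \<Longrightarrow> computes n r_code_tl (\<lambda>Or xs. code_tl (xs!0))"
  unfolding r_code_tl_def by (rule computes_cong, (rule computes_intros | simp add: code_tl_def)+)

definition "r_code_tl_iter = Prim (Proj 0) (Comp r_code_tl [Proj 0])"

lemma computes_code_tl_iter [computes_intros]: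
  "n = 2 \<Longrightarrow> computes n r_code_tl_iter (\<lambda>Or xs. (code_tl ^^ (xs!0)) (xs!1))"
  unfolding r_code_tl_iter_def by (rule computes_Prim, (rule computes_intros | simp add: computes_simps)+)

definition "r_code_nth = Comp r_code_hd [Comp r_code_tl_iter [Proj 1, Proj 0]]"

lemma computes_code_nth [computes_intros]:
  "n = 2 \<Longrightarrow> computes n r_code_nth (\<lambda>Or xs. code_nth (xs!0) (xs!1))"
  unfolding r_code_nth_def by (rule computes_cong, (rule computes_intros | simp add: code_nth_def)+)

definition "r_code_length_bounded =
  Prim Zero (Comp r_add [Proj 0, Comp r_sign [Comp r_code_tl_iter [Proj 1, Proj 2]]])"

lemma computes_code_length_bounded [computes_intros]: "n = 2 \<Longrightarrow>
  computes n r_code_length_bounded (\<lambda>Or xs. \<Sum>t<xs!0. of_bool ((code_tl ^^ t) (xs!1) \<noteq> 0))"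
  unfolding r_code_length_bounded_def
  by (rule computes_Prim, (rule computes_intros | simp add: computes_simps)+)

definition "r_code_length = Comp r_code_length_bounded [Proj 0, Proj 0]"

lemma computes_code_length [computes_intros]:
  "n = 1 \<Longrightarrow> computes n r_code_length (\<lambda>Or xs. code_length (xs!0))"
  unfolding r_code_length_def by (rule computes_cong, (rule computes_intros | simp add: code_length_def)+)

definition "r_code_cons = Comp Succ [Comp r_prod_encode [Proj 0, Proj 1]]"

lemma computes_code_cons [computes_intros]:
  "n = 2 \<Longrightarrow> computes n r_code_cons (\<lambda>Or xs. Suc (prod_encode (xs!0, xs!1)))"
  unfolding r_code_cons_def by (rule computes_cong, (rule computes_intros | simp)+)

definition projs :: "nat \<Rightarrow> nat \<Rightarrow> recf list" where
  "projs k m = map (\<lambda>i. Proj (i + k)) [0..<m]"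

lemma length_projs [simp]: "length (projs k m) = m"
  by (simp add: projs_def)

definition proj_fns :: "nat \<Rightarrow> nat \<Rightarrow> ((nat \<Rightarrow> nat) \<Rightarrow> nat list \<Rightarrow> nat) list" where
  "proj_fns k m = map (\<lambda>i Or xs. xs ! (i + k)) [0..<m]"

lemma computes_all_projs [computes_intros]: "k + m \<le> n \<Longrightarrow> computes_all n (projs k m) (proj_fns k m)"
  unfolding computes_all_def projs_def proj_fns_def by (auto intro: computes_Proj)

lemma map_apply_proj_fns [simp]: "length xs = k + m \<Longrightarrow> map (\<lambda>G. G Or xs) (proj_fns k m) = drop k xs"
  unfolding proj_fns_def by (rule nth_equalityI) (auto simp: add.commute)

lemma map_rev_upt_mirror: "map (\<lambda>i. g (n - Suc i)) (rev [0..<n]) = map g [0..<n]"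
  by (rule nth_equalityI) (auto simp: rev_nth)

text \<open>The list is built backwards by primitive recursion on a counter \<open>r\<close>: step \<open>r\<close>
  conses the entry with index \<open>len - Suc r\<close>.\<close>

definition r_map_upto_rec :: "nat \<Rightarrow> recf \<Rightarrow> recf" where
  "r_map_upto_rec m f =
     Prim Zero (Comp r_code_cons [Comp f (Comp r_pred [Comp r_sub [Proj 2, Proj 1]] # projs 3 m), Proj 0])"

lemma computes_map_upto_rec [computes_intros]:
  assumes f: "\<And>n. n = Suc m \<Longrightarrow> computes n f F" and n: "n = Suc (Suc m)"
  shows "computes n (r_map_upto_rec m f)
    (\<lambda>Or xs. list_encode (map (\<lambda>i. F Or ((xs!1 - Suc i) # drop 2 xs)) (rev [0..<xs!0])))"
  unfolding r_map_upto_rec_def n by (rule computes_Prim, (rule computes_intros f | simp)+)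

definition "r_map_upto m f = Comp (r_map_upto_rec m f) (Proj 0 # Proj 0 # projs 1 m)"

lemma computes_map_upto [computes_intros]:
  assumes f: "\<And>n. n = Suc m \<Longrightarrow> computes n f F" and n: "n = Suc m"
  shows "computes n (r_map_upto m f) (\<lambda>Or xs. list_encode (map (\<lambda>i. F Or (i # tl xs)) [0..<xs!0]))"
proof -
  have "computes n (r_map_upto m f)
      (\<lambda>Or xs. list_encode (map (\<lambda>i. F Or ((xs!0 - Suc i) # tl xs)) (rev [0..<xs!0])))"
    unfolding r_map_upto_def n by (rule computes_cong, (rule computes_intros f | simp add: drop_Suc)+)
  then show ?thesis
    by (rule computes_cong) (rule arg_cong[where f = list_encode], rule map_rev_upt_mirror)
qed

definition r_prod_upto :: "nat \<Rightarrow> recf \<Rightarrow> recf" where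
  "r_prod_upto m f = Prim (r_const 1) (Comp r_mult [Proj 0, Comp f (Proj 1 # projs 2 m)])"

lemma computes_prod_upto [computes_intros]:
  assumes f: "\<And>n. n = Suc m \<Longrightarrow> computes n f F" and n: "n = Suc m"
  shows "computes n (r_prod_upto m f) (\<lambda>Or xs. \<Prod>i<xs!0. F Or (i # tl xs))"
  unfolding r_prod_upto_def n
  by (rule computes_Prim, (rule computes_intros f | simp add: computes_simps)+)

section \<open>Computing the reduction\<close>

lemma sorted_list_of_set_image_strict_mono:
  fixes f :: "'a::linorder \<Rightarrow> 'b::linorder"
  assumes f: "strict_mono f" and F: "finite F"
  shows "sorted_list_of_set (f ` F) = map f (sorted_list_of_set F)"
proof -
  have "sorted_wrt (\<lambda>x y. f x < f y) (sorted_list_of_set F)"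
    using strict_sorted_list_of_set[of F] by (rule sorted_wrt_mono_rel[rotated]) (use f in \<open>simp add: strict_mono_def\<close>)
  moreover have "card (f ` F) = card F"
    using strict_mono_imp_inj_on[OF f] by (simp add: card_image inj_on_subset)
  ultimately show ?thesis
    using F by (subst sorted_list_of_set_unique[symmetric]) (auto simp: sorted_wrt_map)
qed

lemma code_nth_enc_inst:
  "i < 6 \<Longrightarrow> code_nth (enc_inst (A, s, s')) i = [nstates A, nletters A,
     list_encode (map (\<lambda>a. enc_mat (trans A a)) [0..<nletters A]),
     list_encode (sorted_list_of_set (final A)), s, s'] ! i"
  unfolding enc_inst_def by (simp del: list_encode.simps)

lemma code_nth_enc_mat:
  "i < dim_row M \<Longrightarrow> j < dim_col M \<Longrightarrow>
     code_nth (code_nth (code_nth (enc_mat M) 2) i) j = enc_rat (M $$ (i, j))"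
  by (simp add: enc_mat_def mat_to_list_def del: list_encode.simps)

text \<open>On the code of \<open>(A, s, s')\<close>, \<open>block_product_code x j\<close> yields the code of
  \<open>(block_product A j x, s * Suc j, s' * Suc j)\<close>; on other numbers its value is irrelevant.\<close>

definition block_product_entry_code :: "nat \<Rightarrow> nat \<Rightarrow> nat \<Rightarrow> nat \<Rightarrow> nat \<Rightarrow> nat \<Rightarrow> nat" where
  "block_product_entry_code c' r a x j c =
    (if block_step (code_nth c 1) x a (r mod Suc j) (c' mod Suc j)
     then code_nth (code_nth (code_nth (code_nth (code_nth c 2) a) 2) (r div Suc j)) (c' div Suc j)
     else enc_rat 0)"

definition block_product_row_code :: "nat \<Rightarrow> nat \<Rightarrow> nat \<Rightarrow> nat \<Rightarrow> nat \<Rightarrow> nat" where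
  "block_product_row_code r a x j c =
    list_encode (map (\<lambda>c'. block_product_entry_code c' r a x j c) [0..<code_nth c 0 * Suc j])"

definition block_product_mat_code :: "nat \<Rightarrow> nat \<Rightarrow> nat \<Rightarrow> nat \<Rightarrow> nat" where
  "block_product_mat_code a x j c = list_encode [code_nth c 0 * Suc j, code_nth c 0 * Suc j,
     list_encode (map (\<lambda>r. block_product_row_code r a x j c) [0..<code_nth c 0 * Suc j])]"

definition block_product_trans_code :: "nat \<Rightarrow> nat \<Rightarrow> nat \<Rightarrow> nat" where
  "block_product_trans_code x j c = list_encode (map (\<lambda>a. block_product_mat_code a x j c) [0..<code_nth c 1])"

definition block_product_final_code :: "nat \<Rightarrow> nat \<Rightarrow> nat" where
  "block_product_final_code j c =
     list_encode (map (\<lambda>i. code_nth (code_nth c 3) i * Suc j + j) [0..<code_length (code_nth c 3)])"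

definition block_product_code :: "nat \<Rightarrow> nat \<Rightarrow> nat \<Rightarrow> nat" where
  "block_product_code x j c = list_encode [code_nth c 0 * Suc j, code_nth c 1, block_product_trans_code x j c,
     block_product_final_code j c, code_nth c 4 * Suc j, code_nth c 5 * Suc j]"

lemma block_product_mat_code_enc_inst:
  assumes wf: "wf_wa A" and a: "a < nletters A"
  shows "block_product_mat_code a x j (enc_inst (A, s, s')) = enc_mat (trans (block_product A j x) a)"
proof -
  let ?c = "enc_inst (A, s, s')" and ?N = "nstates A * Suc j" and ?M = "trans (block_product A j x) a"
  have entry: "block_product_entry_code c' r a x j ?c = enc_rat (?M $$ (r, c'))"
    if "r < ?N" "c' < ?N" for r c'
    using that trans_carrier[OF wf a]
    by (auto simp: block_product_entry_code_def trans_block_product code_nth_enc_inst a code_nth_enc_mat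
        less_mult_imp_div_less simp del: list_encode.simps mult_Suc_right)
  have "block_product_row_code r a x j ?c = list_encode (map (\<lambda>c'. enc_rat (?M $$ (r, c'))) [0..<?N])"
    if "r < ?N" for r
    unfolding block_product_row_code_def using entry[OF that]
    by (auto simp: code_nth_enc_inst simp del: list_encode.simps mult_Suc_right
        intro!: arg_cong[where f = list_encode] map_cong)
  then have rows: "map (\<lambda>r. block_product_row_code r a x j ?c) [0..<?N]
      = map (\<lambda>r. list_encode (map (\<lambda>c'. enc_rat (?M $$ (r, c'))) [0..<?N])) [0..<?N]"
    by (intro map_cong) auto
  have "dim_row ?M = ?N" "dim_col ?M = ?N" by (simp_all add: trans_block_product)
  then show ?thesis
    unfolding block_product_mat_code_def code_nth_enc_inst[of 0, simplified] rows enc_mat_def mat_to_list_def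
    by (simp add: o_def del: list_encode.simps mult_Suc_right)
qed

lemma block_product_code_enc_inst:
  assumes wf: "wf_wa A"
  shows "block_product_code x j (enc_inst (A, s, s')) = enc_inst (block_product A j x, s * Suc j, s' * Suc j)"
proof -
  let ?c = "enc_inst (A, s, s')" and ?F = "sorted_list_of_set (final A)"
  have "strict_mono (\<lambda>t::nat. t * Suc j + j)"
    by (rule strict_monoI) (simp del: mult_Suc_right)
  then have "sorted_list_of_set (final (block_product A j x)) = map (\<lambda>t. t * Suc j + j) ?F"
    using finite_final[OF wf] by (simp add: sorted_list_of_set_image_strict_mono del: mult_Suc_right)
  also have "\<dots> = map (\<lambda>i. code_nth (list_encode ?F) i * Suc j + j) [0..<length ?F]"
    by (rule nth_equalityI) (simp_all del: mult_Suc_right)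
  finally have "block_product_final_code j ?c = list_encode (sorted_list_of_set (final (block_product A j x)))"
    by (simp add: block_product_final_code_def code_nth_enc_inst del: list_encode.simps mult_Suc_right)
  moreover have "block_product_trans_code x j ?c
      = list_encode (map (\<lambda>a. enc_mat (trans (block_product A j x) a)) [0..<nletters A])"
    by (auto simp: block_product_trans_code_def code_nth_enc_inst block_product_mat_code_enc_inst[OF wf]
        simp del: list_encode.simps intro!: arg_cong[where f = list_encode] map_cong)
  ultimately show ?thesis
    by (simp add: block_product_code_def code_nth_enc_inst enc_inst_def del: list_encode.simps)
qed

definition "r_block_product_entry =
  (let J = Comp Succ [Proj 4]; k = Comp r_code_nth [Proj 5, r_const 1];
       i = Comp r_mod [Proj 1, J]; i' = Comp r_mod [Proj 0, J];
       letter = Comp r_mod [Comp r_div [Proj 3, Comp r_pow [k, Comp r_pred [i']]], k];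
       step = Comp r_mult [Comp r_sign [Comp r_add [Comp r_eq [i', i], Comp r_eq [i', Comp Succ [i]]]],
         Comp r_mult [Comp r_sign [i'], Comp r_eq [Proj 2, letter]]];
       entry = Comp r_code_nth [Comp r_code_nth [Comp r_code_nth [Comp r_code_nth
         [Comp r_code_nth [Proj 5, r_const 2], Proj 2], r_const 2], Comp r_div [Proj 1, J]], Comp r_div [Proj 0, J]]
   in Comp r_if [step, entry, r_const (enc_rat 0)])"

lemma computes_block_product_entry [computes_intros]: "n = 6 \<Longrightarrow> computes n r_block_product_entry
    (\<lambda>Or xs. block_product_entry_code (xs!0) (xs!1) (xs!2) (xs!3) (xs!4) (xs!5))"
  unfolding r_block_product_entry_def Let_def block_product_entry_code_def
  by (rule computes_cong, (rule computes_intros | simp add: block_step_def)+)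

definition "r_block_product_row =
  Comp (r_map_upto 5 r_block_product_entry)
    [Comp r_mult [Comp r_code_nth [Proj 4, r_const 0], Comp Succ [Proj 3]], Proj 0, Proj 1, Proj 2, Proj 3, Proj 4]"

lemma computes_block_product_row [computes_intros]: "n = 5 \<Longrightarrow> computes n r_block_product_row
    (\<lambda>Or xs. block_product_row_code (xs!0) (xs!1) (xs!2) (xs!3) (xs!4))"
  unfolding r_block_product_row_def block_product_row_code_def
  by (rule computes_cong, (rule computes_intros | simp)+)

definition "r_block_product_mat =
  (let N = Comp r_mult [Comp r_code_nth [Proj 3, r_const 0], Comp Succ [Proj 2]]
   in Comp r_code_cons [N, Comp r_code_cons [N, Comp r_code_cons
       [Comp (r_map_upto 4 r_block_product_row) [N, Proj 0, Proj 1, Proj 2, Proj 3], Zero]]])"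

lemma computes_block_product_mat [computes_intros]: "n = 4 \<Longrightarrow> computes n r_block_product_mat
    (\<lambda>Or xs. block_product_mat_code (xs!0) (xs!1) (xs!2) (xs!3))"
  unfolding r_block_product_mat_def Let_def block_product_mat_code_def
  by (rule computes_cong, (rule computes_intros | simp)+)

definition "r_block_product_trans =
  Comp (r_map_upto 3 r_block_product_mat) [Comp r_code_nth [Proj 2, r_const 1], Proj 0, Proj 1, Proj 2]"

lemma computes_block_product_trans [computes_intros]: "n = 3 \<Longrightarrow> computes n r_block_product_trans
    (\<lambda>Or xs. block_product_trans_code (xs!0) (xs!1) (xs!2))"
  unfolding r_block_product_trans_def block_product_trans_code_def
  by (rule computes_cong, (rule computes_intros | simp)+)

definition "r_block_product_final =
  Comp (r_map_upto 2 (Comp r_add [Comp r_mult [Comp r_code_nth [Comp r_code_nth [Proj 2, r_const 3], Proj 0],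
      Comp Succ [Proj 1]], Proj 1]))
    [Comp r_code_length [Comp r_code_nth [Proj 1, r_const 3]], Proj 0, Proj 1]"

lemma computes_block_product_final [computes_intros]: "n = 2 \<Longrightarrow> computes n r_block_product_final
    (\<lambda>Or xs. block_product_final_code (xs!0) (xs!1))"
  unfolding r_block_product_final_def block_product_final_code_def
  by (rule computes_cong, (rule computes_intros | simp)+)

definition "r_block_product =
  (let scaled = \<lambda>i. Comp r_mult [Comp r_code_nth [Proj 2, r_const i], Comp Succ [Proj 1]]
   in Comp r_code_cons [scaled 0, Comp r_code_cons [Comp r_code_nth [Proj 2, r_const 1],
     Comp r_code_cons [r_block_product_trans, Comp r_code_cons [Comp r_block_product_final [Proj 1, Proj 2],
     Comp r_code_cons [scaled 4, Comp r_code_cons [scaled 5, Zero]]]]]])"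

lemma computes_block_product [computes_intros]:
  "n = 3 \<Longrightarrow> computes n r_block_product (\<lambda>Or xs. block_product_code (xs!0) (xs!1) (xs!2))"
  unfolding r_block_product_def Let_def block_product_code_def
  by (rule computes_cong, (rule computes_intros | simp)+)

definition lb_decision :: "(nat \<Rightarrow> nat) \<Rightarrow> nat \<Rightarrow> nat" where
  "lb_decision Or c = (\<Prod>j<Suc (2 * code_nth c 0). \<Prod>x<code_nth c 1 ^ j. Or (block_product_code x j c))"

definition "r_lb_decision =
  Comp (r_prod_upto 1 (Comp (r_prod_upto 2 (Comp Orc [r_block_product]))
      [Comp r_pow [Comp r_code_nth [Proj 1, r_const 1], Proj 0], Proj 0, Proj 1]))
    [Comp Succ [Comp r_mult [r_const 2, Comp r_code_nth [Proj 0, r_const 0]]], Proj 0]"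

lemma computes_lb_decision: "computes 1 r_lb_decision (\<lambda>Or xs. lb_decision Or (xs!0))"
  unfolding r_lb_decision_def lb_decision_def by (rule computes_cong, (rule computes_intros | simp)+)

lemma prod_of_bool_eq: "finite S \<Longrightarrow> (\<Prod>i\<in>S. of_bool (P i) :: nat) = of_bool (\<forall>i\<in>S. P i)"
  by (induction S rule: finite_induct) auto

lemma lb_decision_enc_inst:
  assumes Or: "plb_oracle Or" and wf: "wf_wa A" and s: "s < nstates A" and s': "s' < nstates A"
  shows "lb_decision Or (enc_inst (A, s, s')) = of_bool
    (\<forall>j<Suc (2 * nstates A). \<forall>x<nletters A ^ j. big_O (block_product A j x, s * Suc j, s' * Suc j))"
proof -
  have "Or (block_product_code x j (enc_inst (A, s, s'))) = of_bool (big_O (block_product A j x, s * Suc j, s' * Suc j))"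
    if "x < nletters A ^ j" for j x
    using Or plb_inst_block_product[OF wf s s' that] by (simp add: plb_oracle_def block_product_code_enc_inst[OF wf])
  then show ?thesis
    by (simp add: lb_decision_def code_nth_enc_inst prod_of_bool_eq lessThan_def del: list_encode.simps)
qed

theorem lemma8p13:
  shows "\<exists>p :: recf. \<forall>Or. plb_oracle Or \<longrightarrow>
           (\<forall>I. lb_inst I \<longrightarrow>
              (\<forall>r. ev Or p [enc_inst I] r \<longleftrightarrow> r = (if big_O I then 1 else 0)))"
proof (intro exI[of _ r_lb_decision] allI impI)
  fix Or I r
  assume Or: "plb_oracle Or" and I: "lb_inst I"
  then obtain A s s' where I_def: "I = (A, s, s')" and wf: "wf_wa A" and s: "s < nstates A"
    and s': "s' < nstates A" and lb: "letter_bounded A (lang A s)"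
    by (cases I) (auto simp: lb_inst_def wf_inst_def)
  have "lb_decision Or (enc_inst I) = of_bool (big_O I)"
    using lb_decision_enc_inst[OF Or wf s s'] big_O_iff_block_products[OF wf s s' lb] by (simp add: I_def)
  then show "ev Or r_lb_decision [enc_inst I] r \<longleftrightarrow> r = (if big_O I then 1 else 0)"
    using computes_ev_iff[OF computes_lb_decision] by simp
qed

end
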